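(* Let $G$ be a group with a conjugation-closed generating set $X$, let $g\in\mathrm{Mon}(X)$ and $n=\ell(g)$. The maps $L\colon\mathrm{Fact}(G,g,\mathbf I)\to\mathrm{Comp}(\mathbb Z,n,\mathbf I)$ and $\overline L\colon\mathrm{Fact}(G,g,\mathbf S)\to\mathrm{Comp}(\mathbb Z,n,\mathbf S)$ are surjective order-preserving maps, and $\overline L\circ q=q\circ L$.
   Context: $\mathrm{Mon}(X)$ is the generated submonoid; $\ell(x)$ is the minimal length of a product of elements of $X$ equal to $x$. A linear factorization of $g$ is a row vector $[x_L\ x_1\ \cdots\ x_k\ x_R]$ ($k\ge0$) of elements of $\mathrm{Mon}(X)$ with $x_1,\dots,x_k\ne1$, $\ell(x_L)+\sum_i\ell(x_i)+\ell(x_R)=\ell(g)$ and $x_Lx_1\cdots x_kx_R=g$. With $x_0=x_L$, $x_{k+1}=x_R$, the merge at position $i\in\{0,\dots,k\}$ replaces $x_i,x_{i+1}$ by the single entry $x_ix_{i+1}$. $\mathrm{Fact}(G,g,\mathbf I)$ is the set of linear factorizations ordered by $\mathbf x\le\mathbf y$ iff $\mathbf x$ is obtained from $\mathbf y$ by merges. Two linear factorizations $[x_L\ x_1\cdots x_k\ x_R]$ and $[y_L\ y_1\cdots y_k\ y_R]$ of the same length are equivalent iff $x_i=y_i$ for $1\le i\le k$; the classes are circular factorizations, $\mathrm{Fact}(G,g,\mathbf S)$ is the set of classes with $\bar{\mathbf x}\le\bar{\mathbf y}$ iff $\mathbf x'\le\mathbf y'$ for some representatives, and $q$ is the quotient map.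 Each class has a unique representative with last entry $1$, namely $[gx_Rg^{-1}x_L\ x_1\cdots x_k\ 1]$. For $G=\mathbb Z$, $X=\{1\}$ (additive notation) these are linear compositions $\mathrm{Comp}(\mathbb Z,n,\mathbf I)$ and circular compositions $\mathrm{Comp}(\mathbb Z,n,\mathbf S)$, with quotient map also denoted $q$. $L([x_L\ x_1\cdots x_k\ x_R])=[\ell(x_L)\ \ell(x_1)\cdots\ell(x_k)\ \ell(x_R)]$, and $\overline L$ sends the class with representative $[x_L\ x_1\cdots x_k\ 1]$ to the class of $[\ell(x_L)\ \ell(x_1)\cdots\ell(x_k)\ 0]$. *)

theory Defs
  imports "HOL-Algebra.Generated_Groups" "HOL-Algebra.Elementary_Groups"
begin

definition mon_gen :: "('a, 'b) monoid_scheme \<Rightarrow> 'a set \<Rightarrow> 'a set" where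
  "mon_gen G X = (\<lambda>xs. foldr (monoid.mult G) xs (one G)) ` {xs. set xs \<subseteq> X}"

definition word_len :: "('a, 'b) monoid_scheme \<Rightarrow> 'a set \<Rightarrow> 'a \<Rightarrow> nat" where
  "word_len G X x = (LEAST n. \<exists>xs. length xs = n \<and> set xs \<subseteq> X \<and> foldr (monoid.mult G) xs (one G) = x)"

definition conj_closed :: "('a, 'b) monoid_scheme \<Rightarrow> 'a set \<Rightarrow> bool" where
  "conj_closed G X \<longleftrightarrow> (\<forall>h\<in>carrier G. \<forall>x\<in>X. h \<otimes>\<^bsub>G\<^esub> x \<otimes>\<^bsub>G\<^esub> m_inv G h \<in> X)"

text \<open>A linear factorization [x_L x_1 ... x_k x_R] is a list of length k+2.\<close>

definition lin_fact :: "('a, 'b) monoid_scheme \<Rightarrow> 'a set \<Rightarrow> 'a \<Rightarrow> 'a list set" where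
  "lin_fact G X g = {fs. 2 \<le> length fs \<and> set fs \<subseteq> mon_gen G X
      \<and> (\<forall>i. 0 < i \<and> i < length fs - 1 \<longrightarrow> fs ! i \<noteq> (one G))
      \<and> sum_list (map (word_len G X) fs) = word_len G X g
      \<and> foldr (monoid.mult G) fs (one G) = g}"

definition merge_at :: "('a, 'b) monoid_scheme \<Rightarrow> nat \<Rightarrow> 'a list \<Rightarrow> 'a list" where
  "merge_at G i fs = take i fs @ [fs ! i \<otimes>\<^bsub>G\<^esub> fs ! (i + 1)] @ drop (i + 2) fs"

definition merge_step :: "('a, 'b) monoid_scheme \<Rightarrow> 'a list \<Rightarrow> 'a list \<Rightarrow> bool" where
  "merge_step G xs ys \<longleftrightarrow> (\<exists>i. i + 2 \<le> length ys \<and> xs = merge_at G i ys)"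

definition fact_le :: "('a, 'b) monoid_scheme \<Rightarrow> 'a list \<Rightarrow> 'a list \<Rightarrow> bool" where
  "fact_le G = (merge_step G)\<^sup>*\<^sup>*"

definition circ_equiv :: "('a, 'b) monoid_scheme \<Rightarrow> 'a set \<Rightarrow> 'a \<Rightarrow> ('a list \<times> 'a list) set" where
  "circ_equiv G X g = {(xs, ys). xs \<in> lin_fact G X g \<and> ys \<in> lin_fact G X g
      \<and> length xs = length ys \<and> (\<forall>i. 0 < i \<and> i < length xs - 1 \<longrightarrow> xs ! i = ys ! i)}"

definition circ_fact :: "('a, 'b) monoid_scheme \<Rightarrow> 'a set \<Rightarrow> 'a \<Rightarrow> 'a list set set" where
  "circ_fact G X g = lin_fact G X g // circ_equiv G X g"

definition circ_class :: "('a, 'b) monoid_scheme \<Rightarrow> 'a set \<Rightarrow> 'a \<Rightarrow> 'a list \<Rightarrow> 'a list set" where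
  "circ_class G X g xs = circ_equiv G X g `` {xs}"

definition circ_le :: "('a, 'b) monoid_scheme \<Rightarrow> 'a list set \<Rightarrow> 'a list set \<Rightarrow> bool" where
  "circ_le G A B \<longleftrightarrow> (\<exists>xs\<in>A. \<exists>ys\<in>B. fact_le G xs ys)"

abbreviation lin_comp :: "nat \<Rightarrow> int list set" where
  "lin_comp n \<equiv> lin_fact integer_group {1} (int n)"

abbreviation circ_comp :: "nat \<Rightarrow> int list set set" where
  "circ_comp n \<equiv> circ_fact integer_group {1} (int n)"

definition Lmap :: "('a, 'b) monoid_scheme \<Rightarrow> 'a set \<Rightarrow> 'a list \<Rightarrow> int list" where
  "Lmap G X fs = map (\<lambda>x. int (word_len G X x)) fs"

definition Lbar :: "('a, 'b) monoid_scheme \<Rightarrow> 'a set \<Rightarrow> 'a \<Rightarrow> 'a list set \<Rightarrow> int list set" where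
  "Lbar G X g A = circ_class integer_group {1} (int (word_len G X g))
      (Lmap G X (THE r. r \<in> A \<and> last r = (one G)))"

end

theory Submission
  imports Defs
begin

(* A linear factorization of g is a word of minimal length for g cut into consecutive blocks,
   and L records the block lengths. Conversely, cutting a minimal word for g according to a
   composition of l(g) yields blocks whose products form a linear factorization with exactly
   these lengths: no length can exceed its block length, and the lengths cannot sum to less
   than l(g). Minimality also forces l(x y) = l(x) + l(y) whenever two adjacent entries x, y
   are merged, so L turns merges into merges. A circular class contains exactly one
   representative ending in 1, namely [g x_R g^-1 x_L, x_1, ..., x_k, 1]; as X is closed under
   conjugation, l(g x_R g^-1) <= l(x_R), so this representative has the same inner lengths,
   whence L-bar (q x) = q (L x) and the circular statements follow from the linear ones. *)

section \<open>Inner entries and merges\<close>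

definition inner_entries :: "'c list \<Rightarrow> 'c list" where
  "inner_entries xs = butlast (tl xs)"

lemma inner_entries_Cons_snoc [simp]: "inner_entries (x # ys @ [z]) = ys"
  by (simp add: inner_entries_def)

lemma inner_entries_map: "inner_entries (map f xs) = map f (inner_entries xs)"
  by (simp add: inner_entries_def map_butlast map_tl)

lemma length_inner_entries: "length (inner_entries xs) = length xs - 2"
  by (simp add: inner_entries_def)

lemma set_inner_entries_subset: "set (inner_entries xs) \<subseteq> set xs"
  by (cases xs) (auto simp: inner_entries_def dest: in_set_butlastD)

lemma nth_inner_entries: "i < length xs - 2 \<Longrightarrow> inner_entries xs ! i = xs ! Suc i"
  by (simp add: inner_entries_def nth_butlast nth_tl)

lemma all_inner_index_iff: "(\<forall>i. 0 < i \<and> i < n - 1 \<longrightarrow> Q i) \<longleftrightarrow> (\<forall>j < n - 2. Q (Suc j))"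
proof (intro iffI allI impI)
  fix i assume "\<forall>j < n - 2. Q (Suc j)" "0 < i \<and> i < n - 1"
  then show "Q i" by (cases i) auto
qed auto

lemma all_inner_nth_iff:
  "(\<forall>i. 0 < i \<and> i < length xs - 1 \<longrightarrow> P (xs ! i)) \<longleftrightarrow> (\<forall>x\<in>set (inner_entries xs). P x)"
  unfolding all_inner_index_iff
  by (auto simp: all_set_conv_all_nth length_inner_entries nth_inner_entries)

lemma inner_nth_eq_iff:
  "length xs = length ys \<Longrightarrow>
    (\<forall>i. 0 < i \<and> i < length xs - 1 \<longrightarrow> xs ! i = ys ! i) \<longleftrightarrow> inner_entries xs = inner_entries ys"
  unfolding all_inner_index_iff
  by (auto simp: list_eq_iff_nth_eq length_inner_entries nth_inner_entries)

lemma Cons_snoc_cases: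
  assumes "2 \<le> length xs"
  obtains x ys z where "xs = x # ys @ [z]"
proof -
  obtain x ys' where "xs = x # ys'" "ys' \<noteq> []" using assms by (cases xs) (auto simp: Suc_le_eq)
  then show thesis using that[of x "butlast ys'" "last ys'"] by simp
qed

lemma set_inner_entries_merge:
  "set (inner_entries (A @ c # B)) \<subseteq> set (inner_entries (A @ a # b # B)) \<union> (if A = [] then {} else {c})"
  by (cases A; cases B rule: rev_cases) (auto simp: inner_entries_def butlast_append)

lemma left_in_inner_entries:
  "A \<noteq> [] \<Longrightarrow> a \<in> set (inner_entries (A @ a # b # B))"
  by (cases A) (auto simp: inner_entries_def butlast_append)

lemma merge_step_iff:
  "merge_step G xs ys \<longleftrightarrow> (\<exists>A a b B. ys = A @ a # b # B \<and> xs = A @ (a \<otimes>\<^bsub>G\<^esub> b) # B)"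
proof
  assume "merge_step G xs ys"
  then obtain i where i: "i + 2 \<le> length ys" "xs = merge_at G i ys"
    unfolding merge_step_def by blast
  then have "ys = take i ys @ ys ! i # ys ! Suc i # drop (i + 2) ys"
    by (simp add: Cons_nth_drop_Suc)
  with i show "\<exists>A a b B. ys = A @ a # b # B \<and> xs = A @ (a \<otimes>\<^bsub>G\<^esub> b) # B"
    unfolding merge_at_def by fastforce
next
  assume "\<exists>A a b B. ys = A @ a # b # B \<and> xs = A @ (a \<otimes>\<^bsub>G\<^esub> b) # B"
  then obtain A a b B where "ys = A @ a # b # B" "xs = A @ (a \<otimes>\<^bsub>G\<^esub> b) # B" by blast
  then show "merge_step G xs ys"
    unfolding merge_step_def merge_at_def by (intro exI[of _ "length A"]) (simp add: nth_append)
qed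

lemma length_merge_step: "merge_step G xs ys \<Longrightarrow> length ys = Suc (length xs)"
  by (auto simp: merge_step_iff)

lemma split_by_lengths:
  "sum_list ns = length ws \<Longrightarrow> \<exists>wss. map length wss = ns \<and> concat wss = ws"
proof (induction ns arbitrary: ws)
  case (Cons n ns)
  then have "sum_list ns = length (drop n ws)" by simp
  then obtain wss where "map length wss = ns" "concat wss = drop n ws"
    using Cons.IH by blast
  then show ?case
    using Cons.prems by (intro exI[of _ "take n ws # wss"]) auto
qed simp

lemma list_all2_le_sum_list_imp_eq:
  "list_all2 (\<le>) ms ns \<Longrightarrow> sum_list ns \<le> sum_list ms \<Longrightarrow> ms = (ns :: nat list)"
proof (induction rule: list_all2_induct)
  case (Cons m ms n ns)
  have "sum_list ms \<le> sum_list ns"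
    using Cons.hyps(2) by (induction rule: list_all2_induct) auto
  with Cons show ?case by auto
qed simp

section \<open>Words and word length\<close>

abbreviation list_prod :: "('a, 'b) monoid_scheme \<Rightarrow> 'a list \<Rightarrow> 'a" where
  "list_prod G xs \<equiv> foldr (monoid.mult G) xs (one G)"

lemma word_len_witness:
  assumes "x \<in> mon_gen G X"
  obtains ws where "length ws = word_len G X x" "set ws \<subseteq> X" "list_prod G ws = x"
proof -
  from assms obtain ws where "set ws \<subseteq> X" "list_prod G ws = x"
    unfolding mon_gen_def by auto
  then have "\<exists>n ws. length ws = n \<and> set ws \<subseteq> X \<and> list_prod G ws = x" by blast
  then have "\<exists>ws. length ws = word_len G X x \<and> set ws \<subseteq> X \<and> list_prod G ws = x"
    unfolding word_len_def by (rule LeastI_ex)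
  with that show thesis by blast
qed

lemma word_len_le: "set ws \<subseteq> X \<Longrightarrow> list_prod G ws = x \<Longrightarrow> word_len G X x \<le> length ws"
  unfolding word_len_def by (rule Least_le) blast

lemma word_len_one [simp]: "word_len G X \<one>\<^bsub>G\<^esub> = 0"
  using word_len_le[of "[]" X G] by simp

lemma word_len_eq_0_iff:
  assumes "x \<in> mon_gen G X"
  shows "word_len G X x = 0 \<longleftrightarrow> x = \<one>\<^bsub>G\<^esub>"
proof
  obtain ws where "length ws = word_len G X x" "list_prod G ws = x"
    using word_len_witness[OF assms] by blast
  then show "word_len G X x = 0 \<Longrightarrow> x = \<one>\<^bsub>G\<^esub>" by simp
qed simp

lemma one_mon_gen: "\<one>\<^bsub>G\<^esub> \<in> mon_gen G X"
  unfolding mon_gen_def by (rule image_eqI[of _ _ "[]"]) auto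

context monoid
begin

lemma list_prod_closed: "set xs \<subseteq> carrier G \<Longrightarrow> list_prod G xs \<in> carrier G"
  by (induction xs) auto

lemma list_prod_append:
  "set xs \<subseteq> carrier G \<Longrightarrow> set ys \<subseteq> carrier G \<Longrightarrow>
    list_prod G (xs @ ys) = list_prod G xs \<otimes> list_prod G ys"
  by (induction xs) (auto simp: m_assoc list_prod_closed)

lemma list_prod_concat:
  "(\<And>xs. xs \<in> set xss \<Longrightarrow> set xs \<subseteq> carrier G) \<Longrightarrow>
    list_prod G (concat xss) = list_prod G (map (list_prod G) xss)"
proof (induction xss)
  case (Cons xs xss)
  then have "set (concat xss) \<subseteq> carrier G" by auto
  with Cons show ?case by (simp add: list_prod_append del: foldr_append)
qed simp

lemma list_prod_merge:
  "set (A @ a # b # B) \<subseteq> carrier G \<Longrightarrow> list_prod G (A @ (a \<otimes> b) # B) = list_prod G (A @ a # b # B)"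
  by (simp add: list_prod_append list_prod_closed m_assoc del: foldr_append)

end

context group
begin

lemma inv_mult_cancel_left: "x \<in> carrier G \<Longrightarrow> y \<in> carrier G \<Longrightarrow> inv x \<otimes> (x \<otimes> y) = y"
  by (simp add: m_assoc[symmetric])

lemma list_prod_conj:
  "set ws \<subseteq> carrier G \<Longrightarrow> h \<in> carrier G \<Longrightarrow>
    list_prod G (map (\<lambda>w. h \<otimes> w \<otimes> inv h) ws) = h \<otimes> list_prod G ws \<otimes> inv h"
  by (induction ws) (auto simp: m_assoc list_prod_closed inv_mult_cancel_left)

end

locale word_monoid = monoid G for G (structure) +
  fixes X :: "'a set"
  assumes letters_closed: "X \<subseteq> carrier G"
begin

lemma mon_gen_closed: "mon_gen G X \<subseteq> carrier G"
  unfolding mon_gen_def using letters_closed list_prod_closed by blast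

lemma mon_gen_mult: "x \<in> mon_gen G X \<Longrightarrow> y \<in> mon_gen G X \<Longrightarrow> x \<otimes> y \<in> mon_gen G X"
proof -
  assume "x \<in> mon_gen G X" "y \<in> mon_gen G X"
  then obtain xs ys where "set xs \<subseteq> X" "set ys \<subseteq> X" "x = list_prod G xs" "y = list_prod G ys"
    unfolding mon_gen_def by auto
  with letters_closed show ?thesis
    unfolding mon_gen_def
    by (intro image_eqI[of _ _ "xs @ ys"]) (auto simp: list_prod_append simp del: foldr_append)
qed

lemma list_prod_mon_gen: "set fs \<subseteq> mon_gen G X \<Longrightarrow> list_prod G fs \<in> mon_gen G X"
  by (induction fs) (auto simp: one_mon_gen mon_gen_mult)

lemma word_len_mult:
  assumes "x \<in> mon_gen G X" "y \<in> mon_gen G X"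
  shows "word_len G X (x \<otimes> y) \<le> word_len G X x + word_len G X y"
proof -
  obtain xs where xs: "length xs = word_len G X x" "set xs \<subseteq> X" "list_prod G xs = x"
    using word_len_witness[OF assms(1)] .
  obtain ys where ys: "length ys = word_len G X y" "set ys \<subseteq> X" "list_prod G ys = y"
    using word_len_witness[OF assms(2)] .
  have "list_prod G (xs @ ys) = x \<otimes> y"
    using xs ys letters_closed by (simp add: list_prod_append del: foldr_append)
  then have "word_len G X (x \<otimes> y) \<le> length (xs @ ys)"
    using xs ys by (intro word_len_le) auto
  with xs ys show ?thesis by simp
qed

lemma word_len_list_prod:
  "set fs \<subseteq> mon_gen G X \<Longrightarrow> word_len G X (list_prod G fs) \<le> sum_list (map (word_len G X) fs)"
proof (induction fs)
  case (Cons f fs)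
  then have "word_len G X (list_prod G (f # fs)) \<le> word_len G X f + word_len G X (list_prod G fs)"
    by (auto intro!: word_len_mult list_prod_mon_gen)
  with Cons show ?case by simp
qed simp

end

section \<open>Linear factorizations and compositions\<close>

lemma lin_fact_iff:
  "fs \<in> lin_fact G X g \<longleftrightarrow> 2 \<le> length fs \<and> set fs \<subseteq> mon_gen G X
    \<and> \<one>\<^bsub>G\<^esub> \<notin> set (inner_entries fs)
    \<and> sum_list (map (word_len G X) fs) = word_len G X g \<and> list_prod G fs = g"
  unfolding lin_fact_def all_inner_nth_iff[where P = "\<lambda>x. x \<noteq> \<one>\<^bsub>G\<^esub>"] by blast

context word_monoid
begin

lemma word_len_mult_adjacent:
  assumes "A @ a # b # B \<in> lin_fact G X g"
  shows "word_len G X (a \<otimes> b) = word_len G X a + word_len G X b"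
proof -
  let ?l = "word_len G X"
  have fs: "set (A @ a # b # B) \<subseteq> mon_gen G X" "sum_list (map ?l (A @ a # b # B)) = ?l g"
    "list_prod G (A @ a # b # B) = g"
    using assms by (simp_all add: lin_fact_iff)
  then have ab: "a \<otimes> b \<in> mon_gen G X" by (simp add: mon_gen_mult)
  have "list_prod G (A @ (a \<otimes> b) # B) = g"
    using fs mon_gen_closed by (subst list_prod_merge) auto
  then have "?l g \<le> sum_list (map ?l (A @ (a \<otimes> b) # B))"
    using word_len_list_prod[of "A @ (a \<otimes> b) # B"] fs(1) ab by simp
  moreover have "?l (a \<otimes> b) \<le> ?l a + ?l b"
    using fs(1) by (simp add: word_len_mult)
  ultimately show ?thesis using fs(2) by simp
qed

lemma lin_fact_merge:
  assumes fs: "A @ a # b # B \<in> lin_fact G X g" and "A \<noteq> [] \<or> B \<noteq> []"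
  shows "A @ (a \<otimes> b) # B \<in> lin_fact G X g"
proof -
  let ?l = "word_len G X"
  have ab: "a \<otimes> b \<in> mon_gen G X" "a \<in> mon_gen G X"
    using fs by (simp_all add: lin_fact_iff mon_gen_mult)
  have "a \<otimes> b \<noteq> \<one>" if "A \<noteq> []"
  proof -
    have "a \<noteq> \<one>"
      using fs left_in_inner_entries[OF that] by (auto simp: lin_fact_iff)
    then have "?l a \<noteq> 0" using word_len_eq_0_iff[OF ab(2)] by simp
    then show ?thesis using word_len_mult_adjacent[OF fs] by auto
  qed
  then have "\<one> \<notin> set (inner_entries (A @ (a \<otimes> b) # B))"
    using fs set_inner_entries_merge[of A "a \<otimes> b" B a b] by (auto simp: lin_fact_iff split: if_splits)
  moreover have "list_prod G (A @ (a \<otimes> b) # B) = g"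
    using fs mon_gen_closed by (subst list_prod_merge) (auto simp: lin_fact_iff)
  ultimately show ?thesis
    using fs ab assms(2) word_len_mult_adjacent[OF fs] by (auto simp: lin_fact_iff Suc_le_eq)
qed

lemma merge_step_lin_fact:
  assumes "merge_step G xs ys" "ys \<in> lin_fact G X g" "2 \<le> length xs"
  shows "xs \<in> lin_fact G X g \<and> merge_step integer_group (Lmap G X xs) (Lmap G X ys)"
proof -
  obtain A a b B where ys: "ys = A @ a # b # B" and xs: "xs = A @ (a \<otimes> b) # B"
    using assms(1) by (auto simp: merge_step_iff)
  have "A \<noteq> [] \<or> B \<noteq> []" using assms(3) xs by auto
  then have "xs \<in> lin_fact G X g" using lin_fact_merge assms(2) xs ys by simp
  moreover have "Lmap G X xs = Lmap G X A @ (int (word_len G X a) + int (word_len G X b)) # Lmap G X B"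
    using word_len_mult_adjacent assms(2) xs ys by (simp add: Lmap_def)
  ultimately show ?thesis
    using ys by (auto simp: merge_step_iff Lmap_def)
qed

lemma fact_le_lin_fact:
  assumes "fact_le G xs ys" "ys \<in> lin_fact G X g" "2 \<le> length xs"
  shows "xs \<in> lin_fact G X g \<and> fact_le integer_group (Lmap G X xs) (Lmap G X ys)"
  using assms(1,3) unfolding fact_le_def
proof (induction rule: converse_rtranclp_induct)
  case base
  with assms(2) show ?case by simp
next
  case (step xs zs)
  then have "zs \<in> lin_fact G X g \<and> (merge_step integer_group)\<^sup>*\<^sup>* (Lmap G X zs) (Lmap G X ys)"
    using length_merge_step by fastforce
  with step show ?case
    using merge_step_lin_fact by (meson converse_rtranclp_into_rtranclp)
qed

lemma Lmap_mono:
  assumes "xs \<in> lin_fact G X g" "ys \<in> lin_fact G X g" "fact_le G xs ys"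
  shows "fact_le integer_group (Lmap G X xs) (Lmap G X ys)"
  using fact_le_lin_fact[OF assms(3,2)] assms(1) by (simp add: lin_fact_iff)

end

lemma list_prod_integer_group [simp]: "foldr (monoid.mult integer_group) xs 0 = sum_list xs"
  by (induction xs) simp_all

lemma sum_list_ones: "set ws \<subseteq> {1} \<Longrightarrow> sum_list ws = int (length ws)"
  by (induction ws) auto

lemma mon_gen_integer_group: "mon_gen integer_group {1} = {x. 0 \<le> x}"
proof (intro equalityI subsetI)
  fix x :: int assume "x \<in> {x. 0 \<le> x}"
  then have "x = list_prod integer_group (replicate (nat x) 1)"
    by (auto simp: sum_list_replicate simp del: foldr_replicate)
  then show "x \<in> mon_gen integer_group {1}"
    unfolding mon_gen_def by (rule image_eqI) (auto simp: set_replicate_conv_if)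
qed (auto simp: mon_gen_def sum_list_ones)

lemma word_len_integer_group: "0 \<le> x \<Longrightarrow> word_len integer_group {1} x = nat x"
  unfolding word_len_def
proof (rule Least_equality)
  assume "0 \<le> x"
  then show "\<exists>ws. length ws = nat x \<and> set ws \<subseteq> {1} \<and> list_prod integer_group ws = x"
    by (intro exI[of _ "replicate (nat x) 1"]) (auto simp: sum_list_replicate simp del: foldr_replicate)
qed (auto simp: sum_list_ones)

lemma lin_comp_iff:
  "c \<in> lin_comp n \<longleftrightarrow>
    (\<exists>ns. c = map int ns \<and> 2 \<le> length ns \<and> 0 \<notin> set (inner_entries ns) \<and> sum_list ns = n)"
proof
  assume c: "c \<in> lin_comp n"
  then have nonneg: "\<forall>x\<in>set c. 0 \<le> x"
    by (auto simp: lin_fact_iff mon_gen_integer_group)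
  define ns where "ns = map nat c"
  have c_eq: "c = map int ns" and lens: "map (word_len integer_group {1}) c = ns"
    using nonneg by (simp_all add: ns_def word_len_integer_group map_idI)
  have "0 \<notin> set (inner_entries ns)"
    using c nonneg set_inner_entries_subset[of c] by (force simp: ns_def lin_fact_iff inner_entries_map)
  moreover have "2 \<le> length ns" "sum_list ns = n"
    using c by (simp_all add: lin_fact_iff lens[symmetric] word_len_integer_group)
  ultimately show "\<exists>ns. c = map int ns \<and> 2 \<le> length ns \<and> 0 \<notin> set (inner_entries ns) \<and> sum_list ns = n"
    using c_eq by blast
next
  assume "\<exists>ns. c = map int ns \<and> 2 \<le> length ns \<and> 0 \<notin> set (inner_entries ns) \<and> sum_list ns = n"
  then obtain ns where "c = map int ns" "2 \<le> length ns" "0 \<notin> set (inner_entries ns)" "sum_list ns = n"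
    by blast
  then show "c \<in> lin_comp n"
    by (auto simp: lin_fact_iff mon_gen_integer_group word_len_integer_group inner_entries_map
        o_def sum_list_of_nat)
qed

context word_monoid
begin

lemma Lmap_lin_fact: "fs \<in> lin_fact G X g \<Longrightarrow> Lmap G X fs \<in> lin_comp (word_len G X g)"
proof -
  assume fs: "fs \<in> lin_fact G X g"
  have "0 \<notin> set (inner_entries (map (word_len G X) fs))"
    using fs set_inner_entries_subset[of fs] word_len_eq_0_iff
    by (fastforce simp: lin_fact_iff inner_entries_map)
  with fs show ?thesis
    unfolding lin_comp_iff Lmap_def
    by (intro exI[of _ "map (word_len G X) fs"]) (auto simp: lin_fact_iff)
qed

lemma lin_fact_with_word_lens:
  assumes g: "g \<in> mon_gen G X" and ns: "2 \<le> length ns" "0 \<notin> set (inner_entries ns)"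
    "sum_list ns = word_len G X g"
  obtains fs where "fs \<in> lin_fact G X g" "map (word_len G X) fs = ns"
proof -
  let ?l = "word_len G X"
  obtain ws where ws: "length ws = ?l g" "set ws \<subseteq> X" "list_prod G ws = g"
    using word_len_witness[OF g] .
  obtain wss where wss: "map length wss = ns" "concat wss = ws"
    using split_by_lengths[of ns ws] ns(3) ws(1) by auto
  have blocks: "set w \<subseteq> X" if "w \<in> set wss" for w
    using that ws(2) unfolding wss(2)[symmetric] by auto
  define fs where "fs = map (list_prod G) wss"
  have fs_mon_gen: "set fs \<subseteq> mon_gen G X"
    using blocks by (auto simp: fs_def mon_gen_def)
  have fs_prod: "list_prod G fs = g"
    using blocks letters_closed ws(3) wss(2) unfolding fs_def
    by (subst list_prod_concat[symmetric]) auto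
  have "list_all2 (\<le>) (map ?l fs) ns"
    using blocks unfolding fs_def wss(1)[symmetric]
    by (auto simp: list_all2_map1 list_all2_map2 list_all2_same intro: word_len_le)
  moreover have "sum_list ns \<le> sum_list (map ?l fs)"
    using word_len_list_prod[OF fs_mon_gen] fs_prod ns(3) by simp
  ultimately have lens: "map ?l fs = ns"
    by (rule list_all2_le_sum_list_imp_eq)
  have "\<one> \<notin> set (inner_entries fs)"
  proof
    assume "\<one> \<in> set (inner_entries fs)"
    then have "0 \<in> set (inner_entries (map ?l fs))"
      by (force simp: inner_entries_map)
    with ns(2) lens show False by simp
  qed
  with fs_mon_gen fs_prod lens ns have "fs \<in> lin_fact G X g"
    by (auto simp: lin_fact_iff dest: arg_cong[of _ _ length])
  with lens show thesis by (intro that)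
qed

lemma Lmap_image_lin_fact:
  assumes "g \<in> mon_gen G X"
  shows "Lmap G X ` lin_fact G X g = lin_comp (word_len G X g)"
proof (intro equalityI subsetI)
  fix c assume "c \<in> lin_comp (word_len G X g)"
  then obtain ns where "c = map int ns" "2 \<le> length ns" "0 \<notin> set (inner_entries ns)"
    "sum_list ns = word_len G X g"
    by (auto simp: lin_comp_iff)
  moreover obtain fs where "fs \<in> lin_fact G X g" "map (word_len G X) fs = ns"
    using lin_fact_with_word_lens[OF assms] calculation(2-4) by blast
  ultimately show "c \<in> Lmap G X ` lin_fact G X g"
    unfolding Lmap_def by (auto simp: comp_def)
qed (auto simp: Lmap_lin_fact)

end

section \<open>Circular factorizations\<close>

lemma equiv_circ_equiv: "equiv (lin_fact G X g) (circ_equiv G X g)"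
  by (rule equivI) (auto simp: refl_on_def sym_def trans_def circ_equiv_def)

lemma circ_equiv_iff:
  "(xs, ys) \<in> circ_equiv G X g \<longleftrightarrow>
    xs \<in> lin_fact G X g \<and> ys \<in> lin_fact G X g \<and> inner_entries xs = inner_entries ys"
proof -
  have "length xs = length ys"
    if "xs \<in> lin_fact G X g" "ys \<in> lin_fact G X g" "inner_entries xs = inner_entries ys"
  proof -
    have "length xs - 2 = length ys - 2"
      by (metis that(3) length_inner_entries)
    moreover have "2 \<le> length xs" "2 \<le> length ys"
      using that by (simp_all add: lin_fact_iff)
    ultimately show ?thesis by linarith
  qed
  then show ?thesis
    unfolding circ_equiv_def using inner_nth_eq_iff[of xs ys] by blast
qed

lemma circ_fact_eq_image: "circ_fact G X g = circ_class G X g ` lin_fact G X g"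
  by (auto simp: circ_fact_def circ_class_def quotient_def)

lemma (in word_monoid) Lmap_circ_equiv:
  "(xs, ys) \<in> circ_equiv G X g \<Longrightarrow>
    (Lmap G X xs, Lmap G X ys) \<in> circ_equiv integer_group {1} (int (word_len G X g))"
  using Lmap_lin_fact by (auto simp: circ_equiv_iff) (simp add: Lmap_def inner_entries_map)

locale word_group = word_monoid G X + group G for G (structure) and X
begin

lemma circ_equiv_last_eq:
  assumes "(xs, ys) \<in> circ_equiv G X g" "last xs = last ys"
  shows "xs = ys"
proof -
  have xs: "xs \<in> lin_fact G X g" and ys: "ys \<in> lin_fact G X g"
    and inner: "inner_entries xs = inner_entries ys"
    using assms(1) by (simp_all add: circ_equiv_iff)
  obtain x mid z where xs_eq: "xs = x # mid @ [z]"
    using xs by (auto simp: lin_fact_iff elim: Cons_snoc_cases)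
  obtain y mid' z' where ys_eq: "ys = y # mid' @ [z']"
    using ys by (auto simp: lin_fact_iff elim: Cons_snoc_cases)
  have ys_eq': "ys = y # mid @ [z]"
    using ys_eq xs_eq inner assms(2) by simp
  have carrier: "x \<in> carrier G" "y \<in> carrier G" "set (mid @ [z]) \<subseteq> carrier G"
    using xs ys mon_gen_closed by (auto simp: lin_fact_iff xs_eq ys_eq')
  have "x \<otimes> list_prod G (mid @ [z]) = y \<otimes> list_prod G (mid @ [z])"
    using xs ys by (simp add: lin_fact_iff xs_eq ys_eq' del: foldr_append)
  then have "x = y"
    using right_cancel[OF list_prod_closed[OF carrier(3)] carrier(1,2)] by blast
  then show ?thesis
    using xs_eq ys_eq' by simp
qed

end

locale conj_word_group = word_group +
  assumes letters_conj_closed: "conj_closed G X"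
begin

lemma conj_mon_gen:
  assumes "x \<in> mon_gen G X" "h \<in> carrier G"
  shows "h \<otimes> x \<otimes> inv h \<in> mon_gen G X"
    and "word_len G X (h \<otimes> x \<otimes> inv h) \<le> word_len G X x"
proof -
  obtain ws where ws: "length ws = word_len G X x" "set ws \<subseteq> X" "list_prod G ws = x"
    using word_len_witness[OF assms(1)] .
  let ?ws = "map (\<lambda>w. h \<otimes> w \<otimes> inv h) ws"
  have letters: "set ?ws \<subseteq> X"
    using ws(2) assms(2) letters_conj_closed by (auto simp: conj_closed_def)
  have prod: "list_prod G ?ws = h \<otimes> x \<otimes> inv h"
    using ws letters_closed assms(2) by (auto simp: list_prod_conj)
  show "h \<otimes> x \<otimes> inv h \<in> mon_gen G X"
    using letters prod unfolding mon_gen_def by (intro image_eqI[of _ _ ?ws]) auto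
  show "word_len G X (h \<otimes> x \<otimes> inv h) \<le> word_len G X x"
    using word_len_le[OF letters prod] ws(1) by simp
qed

lemma circ_equiv_last_one:
  assumes g: "g \<in> mon_gen G X" and xs: "xs \<in> lin_fact G X g"
  obtains r where "(xs, r) \<in> circ_equiv G X g" "last r = \<one>"
proof -
  let ?l = "word_len G X"
  obtain xL mid xR where xs_eq: "xs = xL # mid @ [xR]"
    using xs by (auto simp: lin_fact_iff elim: Cons_snoc_cases)
  have mon: "xL \<in> mon_gen G X" "xR \<in> mon_gen G X" "set mid \<subseteq> mon_gen G X"
    using xs by (auto simp: lin_fact_iff xs_eq)
  then have carrier: "xL \<in> carrier G" "xR \<in> carrier G" "set mid \<subseteq> carrier G" "g \<in> carrier G"
    using g mon_gen_closed by auto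
  define c where "c = g \<otimes> xR \<otimes> inv g \<otimes> xL"
  define r where "r = c # mid @ [\<one>]"
  have c_mon: "c \<in> mon_gen G X"
    using mon carrier conj_mon_gen(1) mon_gen_mult by (simp add: c_def)
  have c_len: "?l c \<le> ?l xR + ?l xL"
    using mon carrier conj_mon_gen(1,2)[of xR g] word_len_mult[of "g \<otimes> xR \<otimes> inv g" xL]
    by (simp add: c_def)
  define P where "P = list_prod G mid"
  have P: "P \<in> carrier G"
    using carrier by (simp add: P_def list_prod_closed)
  have "g = xL \<otimes> P \<otimes> xR"
    using xs carrier by (simp add: lin_fact_iff xs_eq P_def list_prod_append list_prod_closed m_assoc
        del: foldr_append)
  then have xLP: "xL \<otimes> P = g \<otimes> inv xR"
    using carrier P by (simp add: inv_solve_right)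
  have "list_prod G r = g \<otimes> xR \<otimes> inv g \<otimes> (xL \<otimes> P)"
    using carrier P by (simp add: r_def c_def P_def list_prod_append m_assoc del: foldr_append)
  also have "\<dots> = g"
    using carrier by (simp add: xLP m_assoc inv_mult_cancel_left)
  finally have "list_prod G r = g" .
  moreover have "set r \<subseteq> mon_gen G X"
    using mon c_mon one_mon_gen by (simp add: r_def)
  moreover from calculation have "sum_list (map ?l r) = ?l g"
    using word_len_list_prod[of r] c_len xs by (auto simp: r_def xs_eq lin_fact_iff)
  ultimately have "(xs, r) \<in> circ_equiv G X g"
    using xs by (auto simp: circ_equiv_iff lin_fact_iff r_def xs_eq)
  then show thesis
    by (rule that) (simp add: r_def)
qed

lemma Lbar_circ_class:
  assumes g: "g \<in> mon_gen G X" and xs: "xs \<in> lin_fact G X g"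
  shows "Lbar G X g (circ_class G X g xs)
    = circ_class integer_group {1} (int (word_len G X g)) (Lmap G X xs)"
proof -
  obtain r where r: "(xs, r) \<in> circ_equiv G X g" "last r = \<one>"
    using circ_equiv_last_one[OF g xs] .
  have "(THE r'. r' \<in> circ_class G X g xs \<and> last r' = \<one>) = r"
  proof (rule the_equality)
    show "r \<in> circ_class G X g xs \<and> last r = \<one>"
      using r by (simp add: circ_class_def)
  next
    fix r' assume "r' \<in> circ_class G X g xs \<and> last r' = \<one>"
    then have "(r, r') \<in> circ_equiv G X g" "last r = last r'"
      using r by (auto simp: circ_class_def circ_equiv_iff)
    then show "r' = r"
      by (metis circ_equiv_last_eq)
  qed
  then show ?thesis
    using equiv_class_eq[OF equiv_circ_equiv Lmap_circ_equiv[OF r(1)]]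
    by (simp add: Lbar_def circ_class_def)
qed

lemma Lbar_image_circ_fact:
  assumes "g \<in> mon_gen G X"
  shows "Lbar G X g ` circ_fact G X g = circ_comp (word_len G X g)"
proof -
  have "Lbar G X g ` circ_fact G X g
      = circ_class integer_group {1} (int (word_len G X g)) ` Lmap G X ` lin_fact G X g"
    by (simp add: circ_fact_eq_image image_image Lbar_circ_class[OF assms])
  then show ?thesis
    by (simp add: Lmap_image_lin_fact[OF assms] circ_fact_eq_image)
qed

lemma Lbar_mono:
  assumes g: "g \<in> mon_gen G X" and A: "A \<in> circ_fact G X g" and B: "B \<in> circ_fact G X g"
    and le: "circ_le G A B"
  shows "circ_le integer_group (Lbar G X g A) (Lbar G X g B)"
proof -
  have Lmap_mem: "Lmap G X xs \<in> Lbar G X g C"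
    if C: "C \<in> circ_fact G X g" and xs: "xs \<in> C" for C xs
  proof -
    obtain xs0 where "xs0 \<in> lin_fact G X g" "C = circ_class G X g xs0"
      using C unfolding circ_fact_eq_image by blast
    with xs show ?thesis
      using Lbar_circ_class[OF g] Lmap_circ_equiv by (auto simp: circ_class_def)
  qed
  obtain xs ys where "xs \<in> A" "ys \<in> B" "fact_le G xs ys"
    using le by (auto simp: circ_le_def)
  moreover have "xs \<in> lin_fact G X g" "ys \<in> lin_fact G X g"
    using A B calculation(1,2) by (auto simp: circ_fact_eq_image circ_class_def circ_equiv_iff)
  ultimately show ?thesis
    unfolding circ_le_def using A B Lmap_mem Lmap_mono by blast
qed

end

theorem proposition3p11:
  fixes G :: "('a, 'b) monoid_scheme" and X :: "'a set" and g :: 'a and n :: nat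
  assumes "group G"
    and "X \<subseteq> carrier G"
    and "generate G X = carrier G"
    and "conj_closed G X"
    and "g \<in> mon_gen G X"
    and "n = word_len G X g"
  shows "Lmap G X ` lin_fact G X g = lin_comp n
    \<and> (\<forall>xs\<in>lin_fact G X g. \<forall>ys\<in>lin_fact G X g.
          fact_le G xs ys \<longrightarrow> fact_le integer_group (Lmap G X xs) (Lmap G X ys))
    \<and> Lbar G X g ` circ_fact G X g = circ_comp n
    \<and> (\<forall>A\<in>circ_fact G X g. \<forall>B\<in>circ_fact G X g.
          circ_le G A B \<longrightarrow> circ_le integer_group (Lbar G X g A) (Lbar G X g B))
    \<and> (\<forall>xs\<in>lin_fact G X g.
          Lbar G X g (circ_class G X g xs) = circ_class integer_group {1} (int n) (Lmap G X xs))"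
proof -
  interpret conj_word_group G X
    using assms(1,2,4) by (simp add: conj_word_group_def conj_word_group_axioms_def word_group_def
        word_monoid_def word_monoid_axioms_def group.is_monoid)
  show ?thesis
    using assms(5) unfolding assms(6)
    by (simp add: Lmap_image_lin_fact Lmap_mono Lbar_image_circ_fact Lbar_mono Lbar_circ_class)
qed

end
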